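(* Let $A$ be a subset of a real vector space such that $\mathrm{we}(A)$ is a cone and every element of $\mathrm{we}(A)$ has a unique decomposition in terms of $A$. Then $A$ is a minimal set, and every element of $A$ is an extreme point of $\mathrm{we}(A)$.
   Context: $\mathrm{we}(A)$ is the set of all $\sum_{i=1}^n\alpha_ix_i$ with $n\in\mathbb N$, $\alpha_i\ge0$, $x_i\in A$. A cone is a subset $K$ closed under addition and multiplication by nonnegative scalars with $K\cap(-K)=\{0\}$. An element $x\in\mathrm{we}(A)$ has a unique decomposition in terms of $A$ if for all mutually different $x_1,\dots,x_n\in A$ and all $\alpha_i,\beta_i\ge0$, $x=\sum_i\alpha_ix_i=\sum_i\beta_ix_i$ implies $\alpha_i=\beta_i$ for all $i$. $A$ is minimal if $\mathrm{we}(A\setminus\{x\})\ne\mathrm{we}(A)$ for all $x\in A$. An element $x\in K\setminus\{0\}$ of a cone $K$ is an extreme point if whenever $y,z\in K\setminus\{0\}$ and $x=y+z$, then $y=\alpha x$ and $z=\beta x$ for some $\alpha,\beta>0$. *)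

theory Defs
  imports "HOL-Analysis.Analysis"
begin

definition we :: "'a::real_vector set \<Rightarrow> 'a set" where
  "we A = {x. \<exists>S \<alpha>. finite S \<and> S \<subseteq> A \<and> (\<forall>s\<in>S. \<alpha> s \<ge> 0) \<and>
                   x = (\<Sum>s\<in>S. \<alpha> s *\<^sub>R s)}"

definition is_cone :: "'a::real_vector set \<Rightarrow> bool" where
  "is_cone K \<longleftrightarrow> (\<forall>x\<in>K. \<forall>y\<in>K. x + y \<in> K) \<and> (\<forall>x\<in>K. \<forall>c::real. c \<ge> 0 \<longrightarrow> c *\<^sub>R x \<in> K)
     \<and> K \<inter> uminus ` K = {0}"

definition unique_decomposition :: "'a::real_vector set \<Rightarrow> 'a \<Rightarrow> bool" where
  "unique_decomposition A x \<longleftrightarrow>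
     (\<forall>S \<alpha> \<beta>. finite S \<and> S \<subseteq> A \<and> (\<forall>s\<in>S. \<alpha> s \<ge> 0 \<and> \<beta> s \<ge> 0) \<and>
        x = (\<Sum>s\<in>S. \<alpha> s *\<^sub>R s) \<and> x = (\<Sum>s\<in>S. \<beta> s *\<^sub>R s) \<longrightarrow> (\<forall>s\<in>S. \<alpha> s = \<beta> s))"

definition minimal_set :: "'a::real_vector set \<Rightarrow> bool" where
  "minimal_set A \<longleftrightarrow> (\<forall>x\<in>A. we (A - {x}) \<noteq> we A)"

definition extreme_point :: "'a::real_vector set \<Rightarrow> 'a \<Rightarrow> bool" where
  "extreme_point K x \<longleftrightarrow> x \<in> K - {0} \<and>
     (\<forall>y\<in>K - {0}. \<forall>z\<in>K - {0}. x = y + z \<longrightarrow>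
        (\<exists>a b::real. a > 0 \<and> b > 0 \<and> y = a *\<^sub>R x \<and> z = b *\<^sub>R x))"

end

theory Submission
  imports Defs
begin

text \<open>Every \<open>x \<in> A\<close> has the trivial decomposition \<open>x = 1 x\<close>, so by uniqueness any
  nonnegative combination of elements of \<open>A\<close> equal to \<open>x\<close> puts weight \<open>1\<close> on \<open>x\<close> and \<open>0\<close>
  elsewhere. Hence \<open>x\<close> is no combination of \<open>A - {x}\<close> (minimality), \<open>x \<noteq> 0\<close> (the empty
  combination), and if \<open>x = y + z\<close> with \<open>y, z \<in> we(A)\<close>, adding decompositions of \<open>y\<close> and
  \<open>z\<close> shows that both are multiples of \<open>x\<close>.\<close>

lemma mem_we_if_mem: "x \<in> A \<Longrightarrow> x \<in> we A"
  unfolding we_def by (intro CollectI exI[of _ "{x}"] exI[of _ "\<lambda>_. 1"]) auto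

lemma we_common_support:
  assumes "y \<in> we A" "z \<in> we A"
  obtains T \<alpha> \<beta> where "finite T" "T \<subseteq> A" "\<forall>s\<in>T. \<alpha> s \<ge> 0 \<and> \<beta> s \<ge> 0"
    "y = (\<Sum>s\<in>T. \<alpha> s *\<^sub>R s)" "z = (\<Sum>s\<in>T. \<beta> s *\<^sub>R s)"
proof -
  obtain S1 a where S1: "finite S1" "S1 \<subseteq> A" "\<forall>s\<in>S1. a s \<ge> 0" "y = (\<Sum>s\<in>S1. a s *\<^sub>R s)"
    using assms(1) unfolding we_def by blast
  obtain S2 b where S2: "finite S2" "S2 \<subseteq> A" "\<forall>s\<in>S2. b s \<ge> 0" "z = (\<Sum>s\<in>S2. b s *\<^sub>R s)"
    using assms(2) unfolding we_def by blast
  define \<alpha> where "\<alpha> s = (if s \<in> S1 then a s else 0)" for s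
  define \<beta> where "\<beta> s = (if s \<in> S2 then b s else 0)" for s
  have "(\<Sum>s\<in>S1. a s *\<^sub>R s) = (\<Sum>s\<in>S1 \<union> S2. \<alpha> s *\<^sub>R s)"
    using S1(1) S2(1) by (intro sum.mono_neutral_cong_left) (auto simp: \<alpha>_def)
  moreover have "(\<Sum>s\<in>S2. b s *\<^sub>R s) = (\<Sum>s\<in>S1 \<union> S2. \<beta> s *\<^sub>R s)"
    using S1(1) S2(1) by (intro sum.mono_neutral_cong_left) (auto simp: \<beta>_def)
  moreover have "\<forall>s\<in>S1 \<union> S2. \<alpha> s \<ge> 0 \<and> \<beta> s \<ge> 0"
    using S1(3) S2(3) by (simp add: \<alpha>_def \<beta>_def)
  ultimately show thesis
    using S1 S2 that[of "S1 \<union> S2" \<alpha> \<beta>] by simp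
qed

lemma unique_decomposition_of_mem:
  assumes "unique_decomposition A x" "x \<in> A"
    and "finite S" "S \<subseteq> A" "\<forall>s\<in>S. \<alpha> s \<ge> 0" "x = (\<Sum>s\<in>S. \<alpha> s *\<^sub>R s)"
  shows "x \<in> S" "\<alpha> x = 1" "\<forall>s\<in>S - {x}. \<alpha> s = 0"
proof -
  define T where "T = insert x S"
  define \<alpha>' where "\<alpha>' s = (if s \<in> S then \<alpha> s else 0)" for s
  define \<delta> where "\<delta> s = (if s = x then 1 else 0 :: real)" for s
  have T: "finite T" "T \<subseteq> A" "S \<subseteq> T" "x \<in> T"
    using assms(2-4) by (auto simp: T_def)
  have "x = (\<Sum>s\<in>S. \<alpha> s *\<^sub>R s)" by (fact assms(6))
  also have "\<dots> = (\<Sum>s\<in>T. \<alpha>' s *\<^sub>R s)"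
    using T(1,3) by (intro sum.mono_neutral_cong_left) (auto simp: \<alpha>'_def)
  finally have x_\<alpha>': "x = (\<Sum>s\<in>T. \<alpha>' s *\<^sub>R s)" .
  have "x = (\<Sum>s\<in>{x}. \<delta> s *\<^sub>R s)" by (simp add: \<delta>_def)
  also have "\<dots> = (\<Sum>s\<in>T. \<delta> s *\<^sub>R s)"
    using T(1,4) by (intro sum.mono_neutral_left) (auto simp: \<delta>_def)
  finally have x_\<delta>: "x = (\<Sum>s\<in>T. \<delta> s *\<^sub>R s)" .
  have nonneg: "\<forall>s\<in>T. \<alpha>' s \<ge> 0 \<and> \<delta> s \<ge> 0"
    using assms(5) by (simp add: \<alpha>'_def \<delta>_def)
  have coeffs: "\<forall>s\<in>T. \<alpha>' s = \<delta> s"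
    using assms(1) T(1,2) nonneg x_\<alpha>' x_\<delta> unfolding unique_decomposition_def by blast
  then have "\<alpha>' x = 1" using T(4) by (simp add: \<delta>_def)
  then show "x \<in> S" "\<alpha> x = 1" by (auto simp: \<alpha>'_def split: if_splits)
  show "\<forall>s\<in>S - {x}. \<alpha> s = 0"
  proof
    fix s assume s: "s \<in> S - {x}"
    with coeffs T(3) have "\<alpha>' s = \<delta> s" by blast
    with s show "\<alpha> s = 0" by (simp add: \<alpha>'_def \<delta>_def)
  qed
qed

lemma nonzero_if_unique_decomposition:
  assumes "unique_decomposition A x" "x \<in> A"
  shows "x \<noteq> 0"
  using unique_decomposition_of_mem(1)[OF assms, of "{}"] by auto

lemma minimal_set_if_unique_decomposition:
  assumes "\<forall>x\<in>A. unique_decomposition A x"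
  shows "minimal_set A"
  unfolding minimal_set_def
proof (intro ballI notI)
  fix x assume x: "x \<in> A" and "we (A - {x}) = we A"
  then have "x \<in> we (A - {x})" by (simp add: mem_we_if_mem)
  then obtain S \<alpha> where S: "finite S" "S \<subseteq> A - {x}" "\<forall>s\<in>S. \<alpha> s \<ge> 0" "x = (\<Sum>s\<in>S. \<alpha> s *\<^sub>R s)"
    unfolding we_def by blast
  have "x \<in> S"
    using unique_decomposition_of_mem(1)[of A x S \<alpha>] S assms x by blast
  with S(2) show False by blast
qed

lemma extreme_point_if_unique_decomposition:
  assumes ud: "unique_decomposition A x" and x: "x \<in> A"
  shows "extreme_point (we A) x"
  unfolding extreme_point_def
proof (intro conjI ballI impI)
  show "x \<in> we A - {0}"
    using mem_we_if_mem[OF x] nonzero_if_unique_decomposition[OF ud x] by simp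
  fix y z assume y: "y \<in> we A - {0}" and z: "z \<in> we A - {0}" and "x = y + z"
  obtain T \<alpha> \<beta> where T: "finite T" "T \<subseteq> A" "\<forall>s\<in>T. \<alpha> s \<ge> 0 \<and> \<beta> s \<ge> 0"
    and y_sum: "y = (\<Sum>s\<in>T. \<alpha> s *\<^sub>R s)" and z_sum: "z = (\<Sum>s\<in>T. \<beta> s *\<^sub>R s)"
    using we_common_support[of y A z] y z by blast
  have x_sum: "x = (\<Sum>s\<in>T. (\<alpha> s + \<beta> s) *\<^sub>R s)"
    using \<open>x = y + z\<close> y_sum z_sum by (simp add: scaleR_add_left sum.distrib)
  have "\<forall>s\<in>T. \<alpha> s + \<beta> s \<ge> 0"
    using T(3) by auto
  note decomp = unique_decomposition_of_mem[OF ud x T(1,2) this x_sum]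
  have off_x: "\<alpha> s = 0" "\<beta> s = 0" if "s \<in> T - {x}" for s
    using decomp(3) T(3) that by (auto simp: add_nonneg_eq_0_iff)
  have single: "(\<Sum>s\<in>T. \<gamma> s *\<^sub>R s) = \<gamma> x *\<^sub>R x" if "\<forall>s\<in>T - {x}. \<gamma> s = 0" for \<gamma>
  proof -
    have "(\<Sum>s\<in>{x}. \<gamma> s *\<^sub>R s) = (\<Sum>s\<in>T. \<gamma> s *\<^sub>R s)"
      using T(1) decomp(1) that by (intro sum.mono_neutral_left) auto
    then show ?thesis by simp
  qed
  have "y = \<alpha> x *\<^sub>R x" "z = \<beta> x *\<^sub>R x"
    unfolding y_sum z_sum using off_x by (simp_all add: single)
  moreover have "\<alpha> x \<noteq> 0" "\<beta> x \<noteq> 0"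
    using y z calculation by auto
  moreover have "\<alpha> x \<ge> 0" "\<beta> x \<ge> 0"
    using T(3) decomp(1) by auto
  ultimately show "\<exists>a b::real. a > 0 \<and> b > 0 \<and> y = a *\<^sub>R x \<and> z = b *\<^sub>R x"
    by (intro exI[of _ "\<alpha> x"] exI[of _ "\<beta> x"]) simp
qed

theorem mainTheorem19:
  fixes A :: "'a::real_vector set"
  assumes "is_cone (we A)"
    and "\<forall>x\<in>we A. unique_decomposition A x"
  shows "minimal_set A \<and> (\<forall>x\<in>A. extreme_point (we A) x)"
proof -
  have ud: "\<forall>x\<in>A. unique_decomposition A x"
    using assms(2) mem_we_if_mem by blast
  show ?thesis
    using minimal_set_if_unique_decomposition[OF ud] extreme_point_if_unique_decomposition ud
    by blast
qed

end
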